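(* Let the timeline be $(\mathbb{Z},\leq)$, let $\Pi$ be a propositional DatalogMTL program, $\mathcal{D}$ a dataset in normal form, $Q$ a proposition and $t_B\le t_E$ integers. Let $B,E,Q'$ be fresh propositions and $\Pi^Q=\Pi\cup\{Q'\leftarrow Q\,\mathcal{U}_{[0,\infty)}\,E,\ \bot\leftarrow B\wedge Q'\}$. Then $Q@[t_B,t_E]$ is entailed from $(\mathcal{D},\Pi)$ under the $s$-brave semantics if and only if there exists a subset $\mathcal{D}'\subseteq\mathcal{D}$ such that $\mathcal{D}'$ is $\Pi$-consistent and $\mathcal{D}'\cup\{B@\{t_B-1\},E@\{t_E+1\}\}$ is $\Pi^Q$-inconsistent.
   Context: A propositional DatalogMTL program uses only nullary predicates. $\mathfrak{M},t\models A\,\mathcal{U}_\varrho A'$ iff there is $t'$ with $t'-t\in\varrho$, $\mathfrak{M},t'\models A'$, and $A$ holds at all $s\in(t,t')$. A dataset is a finite set of facts $P@\iota$ ($\iota$ a non-empty interval); $\Pi$-consistency and entailment are as usual. A set of facts is in normal form if it contains no two distinct facts $P@\iota_1,P@\iota_2$ with $\iota_1\cup\iota_2$ (as a set of integers) equal to the set of integers of an interval. An $s$-repair of $\mathcal{D}$ w.r.t. $\Pi$ is a $\subseteq$-maximal $\Pi$-consistent subset of $\mathcal{D}$. $Q@[t_B,t_E]$ is entailed under $s$-brave semantics if $(\mathcal{R},\Pi)\models Q@[t_B,t_E]$ for some $s$-repair $\mathcal{R}$. *)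

theory Defs
  imports Main
begin

text \<open>Metric ranges: non-negative intervals (a, Some b) = [a,b], (a, None) = [a,\<infinity>).
  Over the integers open/closed endpoints can always be normalised to closed ones.\<close>
type_synonym mrange = "nat \<times> nat option"

definition in_range :: "mrange \<Rightarrow> int \<Rightarrow> bool" where
  "in_range \<rho> d \<longleftrightarrow> int (fst \<rho>) \<le> d \<and> (case snd \<rho> of None \<Rightarrow> True | Some b \<Rightarrow> d \<le> int b)"

datatype 'p body =
    BTop | BBot | BAtom 'p
  | BBoxMinus mrange "'p body" | BBoxPlus mrange "'p body"
  | BDiaMinus mrange "'p body" | BDiaPlus mrange "'p body"
  | BSince mrange "'p body" "'p body" | BUntil mrange "'p body" "'p body"

datatype 'p head = HBot | HAtom 'p | HBoxMinus mrange "'p head" | HBoxPlus mrange "'p head"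

type_synonym 'p rule = "'p head \<times> 'p body list"

type_synonym 'p interp = "'p \<Rightarrow> int \<Rightarrow> bool"

fun holds :: "'p interp \<Rightarrow> int \<Rightarrow> 'p body \<Rightarrow> bool" where
  "holds M t BTop = True"
| "holds M t BBot = False"
| "holds M t (BAtom p) = M p t"
| "holds M t (BBoxMinus r A) = (\<forall>s. in_range r (t - s) \<longrightarrow> holds M s A)"
| "holds M t (BBoxPlus r A) = (\<forall>s. in_range r (s - t) \<longrightarrow> holds M s A)"
| "holds M t (BDiaMinus r A) = (\<exists>s. in_range r (t - s) \<and> holds M s A)"
| "holds M t (BDiaPlus r A) = (\<exists>s. in_range r (s - t) \<and> holds M s A)"
| "holds M t (BSince r A A') =
     (\<exists>t'. in_range r (t - t') \<and> holds M t' A' \<and> (\<forall>s. t' < s \<and> s < t \<longrightarrow> holds M s A))"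
| "holds M t (BUntil r A A') =
     (\<exists>t'. in_range r (t' - t) \<and> holds M t' A' \<and> (\<forall>s. t < s \<and> s < t' \<longrightarrow> holds M s A))"

fun hholds :: "'p interp \<Rightarrow> int \<Rightarrow> 'p head \<Rightarrow> bool" where
  "hholds M t HBot = False"
| "hholds M t (HAtom p) = M p t"
| "hholds M t (HBoxMinus r H) = (\<forall>s. in_range r (t - s) \<longrightarrow> hholds M s H)"
| "hholds M t (HBoxPlus r H) = (\<forall>s. in_range r (s - t) \<longrightarrow> hholds M s H)"

definition model_rule :: "'p interp \<Rightarrow> 'p rule \<Rightarrow> bool" where
  "model_rule M r \<longleftrightarrow> (\<forall>t. (\<forall>A\<in>set (snd r). holds M t A) \<longrightarrow> hholds M t (fst r))"

definition model_prog :: "'p interp \<Rightarrow> 'p rule set \<Rightarrow> bool" where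
  "model_prog M \<Pi> \<longleftrightarrow> (\<forall>r\<in>\<Pi>. model_rule M r)"

definition iset :: "int option \<Rightarrow> int option \<Rightarrow> int set" where
  "iset l u = {t. (case l of None \<Rightarrow> True | Some a \<Rightarrow> a \<le> t) \<and> (case u of None \<Rightarrow> True | Some b \<Rightarrow> t \<le> b)}"

text \<open>A fact P@\<iota>, \<iota> represented by its lower and upper bounds.\<close>
type_synonym 'p fact = "'p \<times> int option \<times> int option"

definition fact_set :: "'p fact \<Rightarrow> int set" where
  "fact_set f = iset (fst (snd f)) (snd (snd f))"

definition is_dataset :: "'p fact set \<Rightarrow> bool" where
  "is_dataset D \<longleftrightarrow> finite D \<and> (\<forall>f\<in>D. fact_set f \<noteq> {})"

definition model_data :: "'p interp \<Rightarrow> 'p fact set \<Rightarrow> bool" where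
  "model_data M D \<longleftrightarrow> (\<forall>f\<in>D. \<forall>t\<in>fact_set f. M (fst f) t)"

definition consistent :: "'p rule set \<Rightarrow> 'p fact set \<Rightarrow> bool" where
  "consistent \<Pi> D \<longleftrightarrow> (\<exists>M. model_prog M \<Pi> \<and> model_data M D)"

definition entails :: "'p rule set \<Rightarrow> 'p fact set \<Rightarrow> 'p \<Rightarrow> int \<Rightarrow> int \<Rightarrow> bool" where
  "entails \<Pi> D Q tB tE \<longleftrightarrow>
     (\<forall>M. model_prog M \<Pi> \<and> model_data M D \<longrightarrow> (\<forall>t. tB \<le> t \<and> t \<le> tE \<longrightarrow> M Q t))"

definition normal_form :: "'p fact set \<Rightarrow> bool" where
  "normal_form D \<longleftrightarrow> (\<forall>f1\<in>D. \<forall>f2\<in>D. f1 \<noteq> f2 \<and> fst f1 = fst f2 \<longrightarrow>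
      \<not> (\<exists>l u. fact_set f1 \<union> fact_set f2 = iset l u))"

definition s_repair :: "'p rule set \<Rightarrow> 'p fact set \<Rightarrow> 'p fact set \<Rightarrow> bool" where
  "s_repair \<Pi> D R \<longleftrightarrow> R \<subseteq> D \<and> consistent \<Pi> R \<and>
     (\<forall>R'. R \<subset> R' \<and> R' \<subseteq> D \<longrightarrow> \<not> consistent \<Pi> R')"

definition s_brave :: "'p rule set \<Rightarrow> 'p fact set \<Rightarrow> 'p \<Rightarrow> int \<Rightarrow> int \<Rightarrow> bool" where
  "s_brave \<Pi> D Q tB tE \<longleftrightarrow> (\<exists>R. s_repair \<Pi> D R \<and> entails \<Pi> R Q tB tE)"

fun body_props :: "'p body \<Rightarrow> 'p set" where
  "body_props BTop = {}"
| "body_props BBot = {}"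
| "body_props (BAtom p) = {p}"
| "body_props (BBoxMinus r A) = body_props A"
| "body_props (BBoxPlus r A) = body_props A"
| "body_props (BDiaMinus r A) = body_props A"
| "body_props (BDiaPlus r A) = body_props A"
| "body_props (BSince r A A') = body_props A \<union> body_props A'"
| "body_props (BUntil r A A') = body_props A \<union> body_props A'"

fun head_props :: "'p head \<Rightarrow> 'p set" where
  "head_props HBot = {}"
| "head_props (HAtom p) = {p}"
| "head_props (HBoxMinus r H) = head_props H"
| "head_props (HBoxPlus r H) = head_props H"

definition prog_props :: "'p rule set \<Rightarrow> 'p set" where
  "prog_props \<Pi> = (\<Union>r\<in>\<Pi>. head_props (fst r) \<union> (\<Union>A\<in>set (snd r). body_props A))"

definition data_props :: "'p fact set \<Rightarrow> 'p set" where
  "data_props D = fst ` D"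

definition prog_Q :: "'p rule set \<Rightarrow> 'p \<Rightarrow> 'p \<Rightarrow> 'p \<Rightarrow> 'p \<Rightarrow> 'p rule set" where
  "prog_Q \<Pi> Q B E Q' = \<Pi> \<union> {(HAtom Q', [BUntil (0, None) (BAtom Q) (BAtom E)]),
                             (HBot, [BAtom B, BAtom Q'])}"

definition point_fact :: "'p \<Rightarrow> int \<Rightarrow> 'p fact" where
  "point_fact P t = (P, Some t, Some t)"

end

theory Submission
  imports Defs
begin

text \<open>Brave entailment of Q@[tB,tE] amounts to the existence of a \<Pi>-consistent D' \<subseteq> D entailing it,
  since every such D' extends to an s-repair and entailment is monotone in the data.
  For a fixed D', the point facts B at tB - 1, E at tE + 1 and the two new rules force
  Q' at tB - 1, hence a contradiction, when Q holds throughout [tB,tE]; conversely a model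
  of (D',\<Pi>) refuting Q somewhere in [tB,tE] is turned into a model of \<Pi>^Q by interpreting
  B, E, Q' freshly, with Q' true precisely where Q U E holds.\<close>

lemma holds_cong:
  "(\<And>p. p \<in> body_props A \<Longrightarrow> M p = M' p) \<Longrightarrow> holds M t A = holds M' t A"
  by (induction A arbitrary: t) auto

lemma hholds_cong:
  "(\<And>p. p \<in> head_props H \<Longrightarrow> M p = M' p) \<Longrightarrow> hholds M t H = hholds M' t H"
  by (induction H arbitrary: t) auto

lemma model_rule_cong:
  assumes "\<And>p. p \<in> head_props (fst r) \<union> (\<Union>A\<in>set (snd r). body_props A) \<Longrightarrow> M p = M' p"
  shows "model_rule M r \<longleftrightarrow> model_rule M' r"
proof -
  have "(\<forall>A\<in>set (snd r). holds M t A) \<longleftrightarrow> (\<forall>A\<in>set (snd r). holds M' t A)" for t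
    using assms holds_cong[of _ M M' t] by blast
  moreover have "hholds M t (fst r) = hholds M' t (fst r)" for t
    using assms by (intro hholds_cong) auto
  ultimately show ?thesis
    unfolding model_rule_def by simp
qed

lemma model_prog_cong:
  assumes "\<And>p. p \<in> prog_props \<Pi> \<Longrightarrow> M p = M' p"
  shows "model_prog M \<Pi> \<longleftrightarrow> model_prog M' \<Pi>"
proof -
  have "model_rule M r \<longleftrightarrow> model_rule M' r" if "r \<in> \<Pi>" for r
    using that assms by (intro model_rule_cong) (auto simp: prog_props_def)
  then show ?thesis
    unfolding model_prog_def by blast
qed

lemma model_data_cong:
  "(\<And>p. p \<in> data_props D \<Longrightarrow> M p = M' p) \<Longrightarrow> model_data M D \<longleftrightarrow> model_data M' D"
  unfolding model_data_def data_props_def by auto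

lemma model_data_insert_point_fact [simp]:
  "model_data M (insert (point_fact P t) D) \<longleftrightarrow> M P t \<and> model_data M D"
  unfolding model_data_def point_fact_def fact_set_def iset_def by auto

lemma model_data_mono: "D' \<subseteq> D \<Longrightarrow> model_data M D \<Longrightarrow> model_data M D'"
  unfolding model_data_def by blast

lemma entails_mono: "D' \<subseteq> D \<Longrightarrow> entails \<Pi> D' Q tB tE \<Longrightarrow> entails \<Pi> D Q tB tE"
  unfolding entails_def using model_data_mono by blast

lemma s_repair_extends:
  assumes "finite D" and "D' \<subseteq> D" and "consistent \<Pi> D'"
  obtains R where "D' \<subseteq> R" and "s_repair \<Pi> D R"
proof -
  let ?C = "{R. D' \<subseteq> R \<and> R \<subseteq> D \<and> consistent \<Pi> R}"
  have "?C \<subseteq> Pow D"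
    by blast
  then have "finite ?C"
    using assms(1) by (meson finite_Pow_iff finite_subset)
  moreover have "?C \<noteq> {}"
    using assms(2,3) by blast
  ultimately obtain R where R: "R \<in> ?C" and maximal: "\<forall>R'\<in>?C. R \<subseteq> R' \<longrightarrow> R = R'"
    using finite_has_maximal[of ?C] by auto
  have "s_repair \<Pi> D R"
    unfolding s_repair_def using R maximal
    by (metis (no_types, lifting) mem_Collect_eq order_trans psubset_eq)
  with R show thesis
    by (intro that) simp_all
qed

lemma s_brave_iff_consistent_subset_entails:
  assumes "finite D"
  shows "s_brave \<Pi> D Q tB tE \<longleftrightarrow> (\<exists>D'. D' \<subseteq> D \<and> consistent \<Pi> D' \<and> entails \<Pi> D' Q tB tE)"
proof
  assume "s_brave \<Pi> D Q tB tE"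
  then obtain R where "s_repair \<Pi> D R" and "entails \<Pi> R Q tB tE"
    unfolding s_brave_def by blast
  moreover from \<open>s_repair \<Pi> D R\<close> have "R \<subseteq> D" and "consistent \<Pi> R"
    unfolding s_repair_def by simp_all
  ultimately show "\<exists>D'. D' \<subseteq> D \<and> consistent \<Pi> D' \<and> entails \<Pi> D' Q tB tE"
    by blast
next
  assume "\<exists>D'. D' \<subseteq> D \<and> consistent \<Pi> D' \<and> entails \<Pi> D' Q tB tE"
  then obtain D' where "D' \<subseteq> D" and "consistent \<Pi> D'" and "entails \<Pi> D' Q tB tE"
    by blast
  obtain R where "D' \<subseteq> R" and "s_repair \<Pi> D R"
    using s_repair_extends[OF assms \<open>D' \<subseteq> D\<close> \<open>consistent \<Pi> D'\<close>] .
  moreover from \<open>D' \<subseteq> R\<close> have "entails \<Pi> R Q tB tE"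
    using \<open>entails \<Pi> D' Q tB tE\<close> by (rule entails_mono)
  ultimately show "s_brave \<Pi> D Q tB tE"
    unfolding s_brave_def by blast
qed

lemma model_prog_prog_Q:
  "model_prog M (prog_Q \<Pi> Q B E Q') \<longleftrightarrow>
     model_prog M \<Pi> \<and>
     (\<forall>t. holds M t (BUntil (0, None) (BAtom Q) (BAtom E)) \<longrightarrow> M Q' t) \<and>
     (\<forall>t. \<not> (M B t \<and> M Q' t))"
  unfolding model_prog_def prog_Q_def model_rule_def by auto

lemma entails_imp_inconsistent_prog_Q:
  assumes "tB \<le> tE" and "entails \<Pi> R Q tB tE"
  shows "\<not> consistent (prog_Q \<Pi> Q B E Q') (R \<union> {point_fact B (tB - 1), point_fact E (tE + 1)})"
proof
  assume "consistent (prog_Q \<Pi> Q B E Q') (R \<union> {point_fact B (tB - 1), point_fact E (tE + 1)})"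
  then obtain M where "model_prog M \<Pi>" and "model_data M R"
    and until_rule: "\<forall>t. holds M t (BUntil (0, None) (BAtom Q) (BAtom E)) \<longrightarrow> M Q' t"
    and bot_rule: "\<forall>t. \<not> (M B t \<and> M Q' t)"
    and "M B (tB - 1)" and "M E (tE + 1)"
    unfolding consistent_def model_prog_prog_Q by auto
  then have "M Q t" if "tB \<le> t" "t \<le> tE" for t
    using assms(2) that unfolding entails_def by blast
  with \<open>M E (tE + 1)\<close> assms(1) have "holds M (tB - 1) (BUntil (0, None) (BAtom Q) (BAtom E))"
    by (auto simp: in_range_def intro!: exI[of _ "tE + 1"])
  with until_rule bot_rule \<open>M B (tB - 1)\<close> show False
    by blast
qed

lemma consistent_prog_Q_if_countermodel:
  assumes "model_prog M \<Pi>" and "model_data M R"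
    and "tB \<le> t" and "t \<le> tE" and "\<not> M Q t"
    and "B \<noteq> E" and "B \<noteq> Q'" and "E \<noteq> Q'"
    and "B \<noteq> Q" and "E \<noteq> Q" and "Q' \<noteq> Q"
    and fresh: "{B, E, Q'} \<inter> (prog_props \<Pi> \<union> data_props R) = {}"
  shows "consistent (prog_Q \<Pi> Q B E Q') (R \<union> {point_fact B (tB - 1), point_fact E (tE + 1)})"
proof -
  \<comment> \<open>Q' holds exactly where Q U E does; B holds only at tB - 1, where Q U E fails since Q fails at t.\<close>
  define M' where "M' = M(B := \<lambda>s. s = tB - 1, E := \<lambda>s. s = tE + 1,
    Q' := \<lambda>s. s \<le> tE + 1 \<and> (\<forall>u. s < u \<and> u < tE + 1 \<longrightarrow> M Q u))"
  have agree: "M' p = M p" if "p \<notin> {B, E, Q'}" for p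
    using that unfolding M'_def by simp
  have "model_prog M' \<Pi> \<longleftrightarrow> model_prog M \<Pi>"
    using fresh by (intro model_prog_cong agree) blast
  moreover have "model_data M' R \<longleftrightarrow> model_data M R"
    using fresh by (intro model_data_cong agree) blast
  moreover have "M' Q' s \<longleftrightarrow> holds M' s (BUntil (0, None) (BAtom Q) (BAtom E))" for s
    using assms(6-11) by (auto simp: M'_def in_range_def)
  moreover have "\<not> (M' B s \<and> M' Q' s)" for s
    using assms(3-7) by (auto simp: M'_def intro!: exI[of _ t])
  moreover have "M' B (tB - 1)" and "M' E (tE + 1)"
    using assms(6-8) by (simp_all add: M'_def)
  ultimately have "model_prog M' (prog_Q \<Pi> Q B E Q')"
    and "model_data M' (R \<union> {point_fact B (tB - 1), point_fact E (tE + 1)})"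
    using assms(1,2) by (simp_all add: model_prog_prog_Q del: holds.simps)
  then show ?thesis
    unfolding consistent_def by blast
qed

lemma inconsistent_prog_Q_iff_entails:
  assumes "tB \<le> tE"
    and "B \<noteq> E" and "B \<noteq> Q'" and "E \<noteq> Q'"
    and "B \<noteq> Q" and "E \<noteq> Q" and "Q' \<noteq> Q"
    and "{B, E, Q'} \<inter> (prog_props \<Pi> \<union> data_props R) = {}"
  shows "\<not> consistent (prog_Q \<Pi> Q B E Q') (R \<union> {point_fact B (tB - 1), point_fact E (tE + 1)})
    \<longleftrightarrow> entails \<Pi> R Q tB tE"
proof
  assume inconsistent:
    "\<not> consistent (prog_Q \<Pi> Q B E Q') (R \<union> {point_fact B (tB - 1), point_fact E (tE + 1)})"
  show "entails \<Pi> R Q tB tE"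
    unfolding entails_def
  proof (intro allI impI)
    fix M t
    assume "model_prog M \<Pi> \<and> model_data M R" and "tB \<le> t \<and> t \<le> tE"
    show "M Q t"
    proof (rule ccontr)
      assume "\<not> M Q t"
      with \<open>model_prog M \<Pi> \<and> model_data M R\<close> \<open>tB \<le> t \<and> t \<le> tE\<close> inconsistent show False
        using consistent_prog_Q_if_countermodel[OF _ _ _ _ _ assms(2-8)] by blast
    qed
  qed
qed (rule entails_imp_inconsistent_prog_Q[OF assms(1)])

theorem mainTheorem5:
  fixes \<Pi> :: "'p rule set" and D :: "'p fact set" and Q B E Q' :: 'p and tB tE :: int
  assumes "finite \<Pi>"
    and "is_dataset D"
    and "normal_form D"
    and "tB \<le> tE"
    and "B \<noteq> E" and "B \<noteq> Q'" and "E \<noteq> Q'"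
    and "B \<noteq> Q" and "E \<noteq> Q" and "Q' \<noteq> Q"
    and "{B, E, Q'} \<inter> (prog_props \<Pi> \<union> data_props D) = {}"
  shows "s_brave \<Pi> D Q tB tE \<longleftrightarrow>
    (\<exists>D'. D' \<subseteq> D \<and> consistent \<Pi> D' \<and>
       \<not> consistent (prog_Q \<Pi> Q B E Q') (D' \<union> {point_fact B (tB - 1), point_fact E (tE + 1)}))"
proof -
  have "finite D"
    using assms(2) unfolding is_dataset_def by blast
  have "\<not> consistent (prog_Q \<Pi> Q B E Q') (D' \<union> {point_fact B (tB - 1), point_fact E (tE + 1)})
    \<longleftrightarrow> entails \<Pi> D' Q tB tE" if "D' \<subseteq> D" for D'
  proof (rule inconsistent_prog_Q_iff_entails)
    show "{B, E, Q'} \<inter> (prog_props \<Pi> \<union> data_props D') = {}"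
      using assms(11) that unfolding data_props_def by blast
  qed (use assms(4-10) in simp_all)
  then show ?thesis
    unfolding s_brave_iff_consistent_subset_entails[OF \<open>finite D\<close>] by blast
qed

end
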